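(* Assume $a_{j,j+1}\neq0$ for all $1\le j\le d-1$. Let $2\le i\le d$, let $\omega\subset\mathbb Z^i$ be an orbit of the map $\mathbf l\mapsto\mathbf lA_i^T$ containing some $\mathbf l$ with last coordinate $l_i\ne0$, fix $\mathbf l^{(0)}\in\omega$ and set $\mathbf l^{(k)}=\mathbf l^{(0)}(A_i^T)^k$ for $k\in\mathbb Z$. Let $$\Psi_i^\perp(\mathbf y)=\sum_{\mathbf l\in\omega}c_{\mathbf l}\,e(\mathbf l\cdot\mathbf y),\qquad \mathbf y\in\mathbb T^i,$$ with only finitely many nonzero $c_{\mathbf l}\in\mathbb C$, and let $N\in\mathbb N$ be such that $c_{\mathbf l^{(n)}}=0$ for all $|n|\ge N$. Then $\Psi_i^\perp$ is a smooth coboundary for $T_i$ (i.e. $\Psi_i^\perp=u\circ T_i-u$ for some $C^\infty$ $u:\mathbb T^i\to\mathbb C$) if and only if $$\sum_{k=1}^{N}c_{\mathbf l^{(k)}}\,e\Big(-\sum_{j=0}^{k-1}\mathbf l^{(j)}\cdot\mathbf b_i\Big)+c_{\mathbf l^{(0)}}+\sum_{k=1}^{N-1}c_{\mathbf l^{(-k)}}\,e\Big(\sum_{j=1}^{k}\mathbf l^{(-j)}\cdot\mathbf b_i\Big)=0.$$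
   Context: $e(x)=\exp(2\pi i x)$. Let $d\ge2$, $A=(a_{l,m})$ a $d\times d$ upper triangular unipotent integer matrix, $\mathbf b\in\mathbb T^d$, $T\mathbf x=\mathbf xA+\mathbf b$ on $\mathbb T^d$ uniquely ergodic. For $1\le i\le d$, $A_i=(a_{l,m})_{1\le l,m\le i}$, $\mathbf b_i=(b_1,\dots,b_i)$, and $T_i\mathbf y=\mathbf yA_i+\mathbf b_i$ on $\mathbb T^i$ (row vectors); $A_i^T$ is the transpose of $A_i$. Note the last coordinate $l_i$ is constant along each orbit $\omega$. *)

theory Defs
  imports "HOL-Probability.Probability"
begin

text \<open>Indices are 0-based: coordinate m (0 \<le> m < i) stands for the
paper's coordinate m+1. A d x d integer matrix is a function A :: nat \<Rightarrow> nat \<Rightarrow> int,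
entry A l m for l, m < d. Real row vectors of R^i are functions nat \<Rightarrow> real, of which
only the coordinates below i matter; integer frequency vectors of Z^i are functions
nat \<Rightarrow> int vanishing at all coordinates \<ge> i.\<close>

definition e :: "real \<Rightarrow> complex" where
  "e x = exp (2 * pi * \<i> * complex_of_real x)"

definition upper_unipotent :: "nat \<Rightarrow> (nat \<Rightarrow> nat \<Rightarrow> int) \<Rightarrow> bool" where
  "upper_unipotent d A \<longleftrightarrow> (\<forall>l<d. A l l = 1) \<and> (\<forall>l<d. \<forall>m<l. A l m = 0)"

definition Tlift :: "nat \<Rightarrow> (nat \<Rightarrow> nat \<Rightarrow> int) \<Rightarrow> (nat \<Rightarrow> real) \<Rightarrow> (nat \<Rightarrow> real) \<Rightarrow> (nat \<Rightarrow> real)" where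
  "Tlift i A b y = (\<lambda>m. if m < i then (\<Sum>l<i. y l * of_int (A l m)) + b m else y m)"

text \<open>The torus T^d, represented by the fundamental domain [0,1)^d (other coordinates 0),
with its Borel sigma-algebra, and the map T acting on it (reduction mod 1).\<close>
definition torus_pts :: "nat \<Rightarrow> (nat \<Rightarrow> real) set" where
  "torus_pts d = {x. (\<forall>m<d. 0 \<le> x m \<and> x m < 1) \<and> (\<forall>m\<ge>d. x m = 0)}"

definition Ttorus :: "nat \<Rightarrow> (nat \<Rightarrow> nat \<Rightarrow> int) \<Rightarrow> (nat \<Rightarrow> real) \<Rightarrow> (nat \<Rightarrow> real) \<Rightarrow> (nat \<Rightarrow> real)" where
  "Ttorus d A b x = (\<lambda>m. if m < d then frac ((\<Sum>l<d. x l * of_int (A l m)) + b m) else 0)"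

definition torus_borel :: "nat \<Rightarrow> (nat \<Rightarrow> real) measure" where
  "torus_borel d = restrict_space borel (torus_pts d)"

definition invariant_prob :: "nat \<Rightarrow> (nat \<Rightarrow> nat \<Rightarrow> int) \<Rightarrow> (nat \<Rightarrow> real) \<Rightarrow> (nat \<Rightarrow> real) measure \<Rightarrow> bool" where
  "invariant_prob d A b M \<longleftrightarrow>
     sets M = sets (torus_borel d) \<and> prob_space M \<and>
     Ttorus d A b \<in> M \<rightarrow>\<^sub>M M \<and>
     (\<forall>S\<in>sets M. emeasure M (Ttorus d A b -` S \<inter> space M) = emeasure M S)"

definition uniquely_ergodic :: "nat \<Rightarrow> (nat \<Rightarrow> nat \<Rightarrow> int) \<Rightarrow> (nat \<Rightarrow> real) \<Rightarrow> bool" where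
  "uniquely_ergodic d A b \<longleftrightarrow> (\<exists>!M. invariant_prob d A b M)"

definition torus_fun :: "nat \<Rightarrow> ((nat \<Rightarrow> real) \<Rightarrow> complex) \<Rightarrow> bool" where
  "torus_fun i u \<longleftrightarrow>
     (\<forall>x x'. (\<forall>j<i. x j = x' j) \<longrightarrow> u x = u x') \<and>
     (\<forall>x j. j < i \<longrightarrow> u (x(j := x j + 1)) = u x)"

definition pdiff :: "nat \<Rightarrow> ((nat \<Rightarrow> real) \<Rightarrow> complex) \<Rightarrow> (nat \<Rightarrow> real) \<Rightarrow> complex" where
  "pdiff j f = (\<lambda>x. vector_derivative (\<lambda>t. f (x(j := t))) (at (x j)))"

fun iter_pdiff :: "nat list \<Rightarrow> ((nat \<Rightarrow> real) \<Rightarrow> complex) \<Rightarrow> (nat \<Rightarrow> real) \<Rightarrow> complex" where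
  "iter_pdiff [] f = f"
| "iter_pdiff (j # js) f = pdiff j (iter_pdiff js f)"

definition smooth_in :: "nat \<Rightarrow> ((nat \<Rightarrow> real) \<Rightarrow> complex) \<Rightarrow> bool" where
  "smooth_in i u \<longleftrightarrow>
     (\<forall>js. set js \<subseteq> {..<i} \<longrightarrow>
        continuous_on UNIV (iter_pdiff js u) \<and>
        (\<forall>j<i. \<forall>x. (\<lambda>t. iter_pdiff js u (x(j := t))) differentiable (at (x j))))"

definition smooth_coboundary :: "nat \<Rightarrow> (nat \<Rightarrow> nat \<Rightarrow> int) \<Rightarrow> (nat \<Rightarrow> real) \<Rightarrow> ((nat \<Rightarrow> real) \<Rightarrow> complex) \<Rightarrow> bool" where
  "smooth_coboundary i A b \<Psi> \<longleftrightarrow>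
     (\<exists>u. torus_fun i u \<and> smooth_in i u \<and> (\<forall>y. \<Psi> y = u (Tlift i A b y) - u y))"

definition supp_in :: "nat \<Rightarrow> (nat \<Rightarrow> int) \<Rightarrow> bool" where
  "supp_in i l \<longleftrightarrow> (\<forall>m\<ge>i. l m = 0)"

definition Mstep :: "nat \<Rightarrow> (nat \<Rightarrow> nat \<Rightarrow> int) \<Rightarrow> (nat \<Rightarrow> int) \<Rightarrow> (nat \<Rightarrow> int)" where
  "Mstep i A l = (\<lambda>m. if m < i then (\<Sum>n<i. l n * A m n) else 0)"

definition orb :: "nat \<Rightarrow> (nat \<Rightarrow> nat \<Rightarrow> int) \<Rightarrow> (nat \<Rightarrow> int) \<Rightarrow> int \<Rightarrow> (nat \<Rightarrow> int)" where
  "orb i A l0 k = (if 0 \<le> k then (Mstep i A ^^ nat k) l0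
                   else (THE l. supp_in i l \<and> (Mstep i A ^^ nat (- k)) l = l0))"

definition dotr :: "nat \<Rightarrow> (nat \<Rightarrow> int) \<Rightarrow> (nat \<Rightarrow> real) \<Rightarrow> real" where
  "dotr i l y = (\<Sum>m<i. of_int (l m) * y m)"

end

theory Submission
  imports Defs
begin

text \<open>
  Index the orbit as l_k = l_0 (A_i^T)^k, put c_k = c(l_k) and \<beta>_k = l_k \<cdot> b_i, and let \<sigma>_k be
  the Birkhoff sums of \<beta>, so that \<sigma>_(k+1) = \<sigma>_k + \<beta>_k. If \<Psi> = u \<circ> T_i - u and v_k is the
  Fourier coefficient of u at l_k, comparing Fourier coefficients at l_(k+1) = l_k A_i^T gives
  c_(k+1) = e(\<beta>_k) v_k - v_(k+1). Twisting by e(-\<sigma>_k) turns this into G_(k+1) = V_k - V_(k+1)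
  for G_k = c_k e(-\<sigma>_k) and V_k = v_k e(-\<sigma>_k), and the displayed expression is the sum of
  all G_k. Since l_i \<noteq> 0 and a_(i-1,i) \<noteq> 0, the penultimate coordinate of l_k grows linearly
  in k, so V_k \<rightarrow> 0 as |k| \<rightarrow> \<infinity> by Riemann--Lebesgue, and telescoping shows that the sum
  vanishes. Conversely, if the sum vanishes then G has a finitely supported primitive V, and
  untwisting it gives the Fourier coefficients of a trigonometric polynomial u that solves
  the coboundary equation.\<close>

section \<open>The character \<open>e\<close>\<close>

lemma e_add: "e (x + y) = e x * e y"
  unfolding e_def by (simp add: distrib_left exp_add)

lemma e_zero [simp]: "e 0 = 1"
  unfolding e_def by simp

lemma norm_e [simp]: "norm (e x) = 1"
  unfolding e_def by (simp add: norm_exp_eq_Re)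

lemma e_of_int [simp]: "e (of_int k) = 1"
proof -
  have "e (of_int k) = exp (0 + \<i> * (of_int k * (of_real pi * 2)))"
    unfolding e_def by (simp add: algebra_simps)
  also have "\<dots> = 1"
    by (subst exp_plus_2pin) simp
  finally show ?thesis .
qed

lemma e_uminus_mult: "e (- x) * e x = 1"
  using e_add[of "- x" x] by simp

lemma e_add_half: "e (x + 1/2) = - e x"
proof -
  have "e (1/2) = exp (pi * \<i>)"
    unfolding e_def by (simp add: algebra_simps)
  also have "\<dots> = -1"
    by (simp add: exp_pi_i')
  finally show ?thesis
    by (simp add: e_add)
qed

lemma continuous_on_e [continuous_intros]:
  "continuous_on S f \<Longrightarrow> continuous_on S (\<lambda>x. e (f x))"
  unfolding e_def by (intro continuous_intros)

lemma e_linear_has_vector_derivative: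
  "((\<lambda>t. e (a + c * (t - t0))) has_vector_derivative (2 * pi * \<i> * c) * e a) (at t0)"
proof -
  define f where "f z = exp (2 * pi * \<i> * (of_real a + of_real c * (z - of_real t0)))" for z
  have "(f has_field_derivative (2 * pi * \<i> * c) * e a) (at (of_real t0))"
    unfolding f_def e_def by (auto intro!: derivative_eq_intros)
  then have "((\<lambda>t. f (of_real t)) has_vector_derivative (2 * pi * \<i> * c) * e a) (at t0)"
    using has_vector_derivative_real_field[of f _ t0 UNIV] by simp
  moreover have "(\<lambda>t. f (of_real t)) = (\<lambda>t. e (a + c * (t - t0)))"
    unfolding f_def e_def by (auto intro!: ext)
  ultimately show ?thesis
    by simp
qed

lemma integral_unit_interval_e:
  "integral {0..1} (\<lambda>t. e (of_int k * t)) = (if k = 0 then 1 else 0)"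
proof (cases "k = 0")
  case False
  define F where "F t = e (of_int k * t) / (2 * pi * \<i> * of_int k)" for t
  have "(F has_vector_derivative e (of_int k * t)) (at t within {0..1})" for t
  proof -
    have "(\<lambda>s. e (of_int k * t + of_int k * (s - t))) = (\<lambda>s. e (of_int k * s))"
      by (simp add: algebra_simps)
    then have "((\<lambda>s. e (of_int k * s)) has_vector_derivative (2 * pi * \<i> * of_int k) * e (of_int k * t)) (at t)"
      using e_linear_has_vector_derivative[of "of_int k * t" "of_int k" t] by simp
    from has_vector_derivative_divide[OF this, of "2 * pi * \<i> * of_int k"] show ?thesis
      unfolding F_def using False by (auto intro: has_vector_derivative_at_within)
  qed
  then have "((\<lambda>t. e (of_int k * t)) has_integral (F 1 - F 0)) {0..1}"
    by (intro fundamental_theorem_of_calculus) auto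
  moreover have "F 1 - F 0 = 0"
    unfolding F_def by simp
  ultimately show ?thesis
    using False by (simp add: integral_unique)
qed simp

section \<open>Iterated integrals over the unit cube\<close>

lemma continuous_on_coordinate [continuous_intros]:
  "continuous_on S (\<lambda>y::nat \<Rightarrow> real. y m)"
  by (rule continuous_on_subset[OF continuous_on_product_coordinates]) simp

lemma continuous_on_fun_upd_pair:
  "continuous_on UNIV (\<lambda>p::(nat \<Rightarrow> real) \<times> real. (fst p)(n := snd p))"
proof (rule continuous_on_coordinatewise_then_product)
  fix m
  show "continuous_on UNIV (\<lambda>p::(nat \<Rightarrow> real) \<times> real. ((fst p)(n := snd p)) m)"
    by (cases "m = n")
      (auto intro!: continuous_intros continuous_on_compose2[OF continuous_on_coordinate continuous_on_fst])
qed

lemma continuous_on_comp_fun_upd_pair: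
  "continuous_on UNIV g \<Longrightarrow> continuous_on S (\<lambda>p::(nat \<Rightarrow> real) \<times> real. g ((fst p)(n := snd p)))"
  using continuous_on_compose2[OF _ continuous_on_fun_upd_pair] continuous_on_subset by blast

lemma continuous_on_comp_fun_upd:
  assumes "continuous_on UNIV (g :: (nat \<Rightarrow> real) \<Rightarrow> 'a::topological_space)"
  shows "continuous_on S (\<lambda>t. g (x(n := t)))"
proof -
  have "continuous_on UNIV (\<lambda>t::real. (x, t))"
    by (intro continuous_intros)
  from continuous_on_compose2[OF continuous_on_comp_fun_upd_pair[OF assms, of UNIV n] this]
  show ?thesis
    using continuous_on_subset by fastforce
qed

lemma continuous_on_fun_upd_add [continuous_intros]:
  "continuous_on S (\<lambda>y::nat \<Rightarrow> real. y(j := y j + h))"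
proof (intro continuous_on_coordinatewise_then_product)
  fix m
  show "continuous_on S (\<lambda>y::nat \<Rightarrow> real. (y(j := y j + h)) m)"
    by (cases "m = j") (auto intro!: continuous_intros)
qed

lemma continuous_on_integral_fun_upd:
  assumes "continuous_on UNIV (g :: (nat \<Rightarrow> real) \<Rightarrow> complex)"
  shows "continuous_on UNIV (\<lambda>x. integral {0..1} (\<lambda>t. g (x(n := t))))"
proof -
  have "continuous_on (UNIV \<times> cbox 0 (1::real)) (\<lambda>(x, t). g (x(n := t)))"
    using continuous_on_comp_fun_upd_pair[OF assms, of "UNIV \<times> cbox 0 1" n]
    by (simp add: case_prod_beta)
  from integral_continuous_on_param[OF this] show ?thesis
    by simp
qed

text \<open>\<open>cube_integral n g x\<close> integrates \<open>g\<close> over the coordinates \<open>0, \<dots>, n - 1\<close> of \<open>x\<close>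
  running through the unit cube; the remaining coordinates of \<open>x\<close> are parameters.\<close>

fun cube_integral :: "nat \<Rightarrow> ((nat \<Rightarrow> real) \<Rightarrow> complex) \<Rightarrow> (nat \<Rightarrow> real) \<Rightarrow> complex" where
  "cube_integral 0 g = g"
| "cube_integral (Suc n) g = cube_integral n (\<lambda>x. integral {0..1} (\<lambda>t. g (x(n := t))))"

lemma cube_integral_add:
  assumes "continuous_on UNIV f" "continuous_on UNIV g"
  shows "cube_integral n (\<lambda>x. f x + g x) = (\<lambda>x. cube_integral n f x + cube_integral n g x)"
  using assms
proof (induction n arbitrary: f g)
  case (Suc n)
  have "(\<lambda>x. integral {0..1} (\<lambda>t. f (x(n := t)) + g (x(n := t))))
      = (\<lambda>x. integral {0..1} (\<lambda>t. f (x(n := t))) + integral {0..1} (\<lambda>t. g (x(n := t))))"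
    by (intro ext integral_add integrable_continuous_interval continuous_on_comp_fun_upd Suc.prems)
  then show ?case
    by (simp only: cube_integral.simps
        Suc.IH[OF continuous_on_integral_fun_upd[OF Suc.prems(1)] continuous_on_integral_fun_upd[OF Suc.prems(2)]])
qed simp

lemma cube_integral_cmult: "cube_integral n (\<lambda>x. c * g x) = (\<lambda>x. c * cube_integral n g x)"
  by (induction n arbitrary: g) simp_all

lemma cube_integral_diff:
  assumes "continuous_on UNIV f" "continuous_on UNIV g"
  shows "cube_integral n (\<lambda>x. f x - g x) = (\<lambda>x. cube_integral n f x - cube_integral n g x)"
proof -
  have "continuous_on UNIV (\<lambda>x. (-1) * g x)"
    by (intro continuous_intros assms)
  from cube_integral_add[OF assms(1) this, of n] show ?thesis
    using cube_integral_cmult[of n "-1" g] by simp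
qed

lemma cube_integral_sum:
  assumes "finite K" "\<And>k. k \<in> K \<Longrightarrow> continuous_on UNIV (f k)"
  shows "cube_integral n (\<lambda>x. \<Sum>k\<in>K. f k x) = (\<lambda>x. \<Sum>k\<in>K. cube_integral n (f k) x)"
  using assms
proof (induction K rule: finite_induct)
  case empty
  show ?case
    using cube_integral_cmult[of n 0 "\<lambda>_. 0"] by simp
next
  case (insert k K)
  have "continuous_on UNIV (\<lambda>x. \<Sum>k\<in>K. f k x)"
    by (intro continuous_on_sum) (use insert in auto)
  then show ?case
    using insert cube_integral_add[of "f k" _ n] by simp
qed

lemma norm_cube_integral_le:
  assumes "continuous_on UNIV g" "\<And>x. norm (g x) \<le> B"
  shows "norm (cube_integral n g x) \<le> B"
  using assms
proof (induction n arbitrary: g)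
  case (Suc n)
  have "norm (integral {0..1} (\<lambda>t. g (x(n := t)))) \<le> B" for x
    using integral_bound[of 0 1 "\<lambda>t. g (x(n := t))" B] continuous_on_comp_fun_upd[OF Suc.prems(1)] Suc.prems(2)
    by auto
  then show ?case
    unfolding cube_integral.simps by (rule Suc.IH[OF continuous_on_integral_fun_upd[OF Suc.prems(1)]])
qed simp

lemma periodic_add_of_int:
  assumes "\<And>t. f (t + 1) = f t"
  shows "f (t + of_int k) = f t"
proof (induction k arbitrary: t rule: int_induct[where k = 0])
  case (step1 i)
  then show ?case
    using assms[of "t + of_int i"] by (simp add: add.assoc)
next
  case (step2 i)
  then show ?case
    using assms[of "t + of_int (i - 1)"] by (simp add: add.assoc)
qed simp

lemma integral_unit_interval_periodic_shift:
  fixes f :: "real \<Rightarrow> complex"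
  assumes cf: "continuous_on UNIV f" and per: "\<And>t. f (t + 1) = f t"
  shows "integral {0..1} (\<lambda>t. f (t + c)) = integral {0..1} f"
proof -
  define c' where "c' = frac c"
  have c': "0 \<le> c'" "c' < 1"
    unfolding c'_def by (auto simp: frac_lt_1)
  have "f (t + c) = f (t + c')" for t
    using periodic_add_of_int[of f "t + c'" "\<lfloor>c\<rfloor>", OF per]
    unfolding c'_def frac_def by (simp add: algebra_simps)
  then have "integral {0..1} (\<lambda>t. f (t + c)) = integral {0..1} (f \<circ> (+) c')"
    by (simp add: o_def add.commute)
  also have "\<dots> = integral {c'..1 + c'} f"
    using integral_shift_Icc_real[of 0 1 f c'] by simp
  also have "\<dots> = integral {c'..1} f + integral {1..1 + c'} f"
    by (rule Henstock_Kurzweil_Integration.integral_combine[symmetric])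
      (use c' in \<open>auto intro!: integrable_continuous_interval continuous_on_subset[OF cf]\<close>)
  also have "integral {1..1 + c'} f = integral {0..c'} (f \<circ> (+) 1)"
    using integral_shift_Icc_real[of 0 c' f 1] by (simp add: add.commute)
  also have "f \<circ> (+) 1 = f"
    using per by (auto simp: add.commute)
  also have "integral {c'..1} f + integral {0..c'} f = integral {0..1} f"
    using c' by (subst add.commute, intro Henstock_Kurzweil_Integration.integral_combine
        integrable_continuous_interval continuous_on_subset[OF cf]) auto
  finally show ?thesis .
qed

text \<open>The unipotent affine map \<open>y \<mapsto> y M + s\<close> with \<open>M\<close> upper unitriangular, of which only
  the strictly upper part of \<open>M\<close> is given.\<close>

definition shear :: "nat \<Rightarrow> (nat \<Rightarrow> nat \<Rightarrow> real) \<Rightarrow> (nat \<Rightarrow> real) \<Rightarrow> (nat \<Rightarrow> real) \<Rightarrow> (nat \<Rightarrow> real)" where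
  "shear n M s y = (\<lambda>m. if m < n then y m + (\<Sum>l<m. y l * M l m) + s m else y m)"

lemma shear_Suc_fun_upd:
  "shear (Suc n) M s (x(n := t)) = (shear n M s x)(n := t + ((\<Sum>l<n. x l * M l n) + s n))"
  unfolding shear_def by (auto intro!: ext sum.cong)

lemma integral_shear_Suc_fun_upd:
  fixes g :: "(nat \<Rightarrow> real) \<Rightarrow> complex"
  assumes "continuous_on UNIV g" "\<And>x. g (x(n := x n + 1)) = g x"
  shows "integral {0..1} (\<lambda>t. g (shear (Suc n) M s (x(n := t))))
    = integral {0..1} (\<lambda>t. g ((shear n M s x)(n := t)))"
proof -
  define z where "z = shear n M s x"
  have "integral {0..1} (\<lambda>t. g (shear (Suc n) M s (x(n := t))))
      = integral {0..1} (\<lambda>t. g (z(n := t + ((\<Sum>l<n. x l * M l n) + s n))))"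
    by (simp add: shear_Suc_fun_upd z_def)
  also have "\<dots> = integral {0..1} (\<lambda>t. g (z(n := t)))"
  proof (rule integral_unit_interval_periodic_shift[where f = "\<lambda>t. g (z(n := t))"])
    show "continuous_on UNIV (\<lambda>t. g (z(n := t)))"
      by (rule continuous_on_comp_fun_upd[OF assms(1)])
    show "g (z(n := t + 1)) = g (z(n := t))" for t
      using assms(2)[of "z(n := t)"] by (simp only: fun_upd_same fun_upd_upd)
  qed
  finally show ?thesis
    unfolding z_def .
qed

text \<open>The innermost integration absorbs the translation of the last coordinate by periodicity,
  and what remains is a shear in one dimension fewer.\<close>

lemma cube_integral_shear:
  assumes "continuous_on UNIV g" "\<And>x m. m < n \<Longrightarrow> g (x(m := x m + 1)) = g x"
  shows "cube_integral n (\<lambda>y. g (shear n M s y)) = cube_integral n g"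
  using assms
proof (induction n arbitrary: g)
  case 0
  then show ?case
    by (simp add: shear_def)
next
  case (Suc n)
  define G where "G z = integral {0..1} (\<lambda>t. g (z(n := t)))" for z
  have "G (x(m := x m + 1)) = G x" if "m < n" for x m
  proof -
    have "(x(m := x m + 1))(n := t) = (x(n := t))(m := (x(n := t)) m + 1)" for t
      using that by (auto intro!: ext)
    then show ?thesis
      unfolding G_def using Suc.prems(2)[of m] that by (simp only: less_SucI)
  qed
  then have "cube_integral n (\<lambda>x. G (shear n M s x)) = cube_integral n G"
    by (intro Suc.IH) (auto simp only: G_def intro: continuous_on_integral_fun_upd[OF Suc.prems(1)])
  then show ?case
    by (simp add: integral_shear_Suc_fun_upd Suc.prems G_def[abs_def])
qed

lemma cube_integral_e:
  "cube_integral n (\<lambda>y. c * e (\<Sum>m<n. of_int (k m) * y m)) = (\<lambda>x. if \<forall>m<n. k m = 0 then c else 0)"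
proof (induction n arbitrary: c)
  case (Suc n)
  have "integral {0..1} (\<lambda>t. c * e (\<Sum>m<Suc n. of_int (k m) * (x(n := t)) m))
      = (c * (if k n = 0 then 1 else 0)) * e (\<Sum>m<n. of_int (k m) * x m)" for x
  proof -
    have "(\<lambda>t. c * e (\<Sum>m<Suc n. of_int (k m) * (x(n := t)) m))
        = (\<lambda>t. (c * e (\<Sum>m<n. of_int (k m) * x m)) * e (of_int (k n) * t))"
      by (rule ext) (simp add: sum.lessThan_Suc e_add mult.assoc)
    then have "integral {0..1} (\<lambda>t. c * e (\<Sum>m<Suc n. of_int (k m) * (x(n := t)) m))
        = (c * e (\<Sum>m<n. of_int (k m) * x m)) * (if k n = 0 then 1 else 0)"
      by (simp only: integral_mult_right integral_unit_interval_e)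
    then show ?thesis
      by (simp only: ac_simps)
  qed
  then have "cube_integral (Suc n) (\<lambda>y. c * e (\<Sum>m<Suc n. of_int (k m) * y m))
      = cube_integral n (\<lambda>x. (c * (if k n = 0 then 1 else 0)) * e (\<Sum>m<n. of_int (k m) * x m))"
    by (simp only: cube_integral.simps)
  then show ?case
    by (auto simp: Suc.IH less_Suc_eq)
qed simp

section \<open>Functions on the torus and their Fourier coefficients\<close>

lemma continuous_on_dotr [continuous_intros]: "continuous_on S (\<lambda>y. dotr i l y)"
  unfolding dotr_def by (intro continuous_intros)

lemma dotr_fun_upd:
  "dotr i l (y(j := t)) = dotr i l y + of_int (if j < i then l j else 0) * (t - y j)"
proof -
  have "dotr i l (y(j := t)) - dotr i l y = (\<Sum>m<i. of_int (l m) * ((y(j := t)) m - y m))"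
    unfolding dotr_def by (simp add: sum_subtractf[symmetric] algebra_simps)
  also have "\<dots> = (\<Sum>m<i. if m = j then of_int (l j) * (t - y j) else 0)"
    by (intro sum.cong) auto
  finally show ?thesis
    by (simp add: diff_eq_eq add.commute)
qed

lemma e_dotr_fun_upd_add_one:
  assumes "j < i"
  shows "e (dotr i l (x(j := x j + 1))) = e (dotr i l x)"
    and "e (- dotr i l (x(j := x j + 1))) = e (- dotr i l x)"
  using assms e_add[of "dotr i l x" "of_int (l j)"] e_add[of "- dotr i l x" "of_int (- l j)"]
    e_of_int[of "- l j"]
  by (simp_all add: dotr_fun_upd)

lemma torus_fun_add_of_int:
  assumes "torus_fun i u" "j < i"
  shows "u (x(j := x j + of_int k)) = u x"
proof -
  have "u (x(j := t + 1)) = u (x(j := t))" for t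
    using assms unfolding torus_fun_def by (metis fun_upd_same fun_upd_upd)
  from periodic_add_of_int[where f = "\<lambda>t. u (x(j := t))", OF this] show ?thesis
    by (metis fun_upd_triv)
qed

lemma torus_fun_eq_if_congruent:
  assumes "torus_fun i u" "\<And>m. m < i \<Longrightarrow> \<exists>k::int. x m = x' m + of_int k"
  shows "u x = u x'"
proof -
  have "\<forall>x x'. (\<forall>m<n. \<exists>k::int. x m = x' m + of_int k) \<and> (\<forall>m. n \<le> m \<and> m < i \<longrightarrow> x m = x' m)
          \<longrightarrow> u x = u x'" if "n \<le> i" for n
    using that
  proof (induction n)
    case 0
    then show ?case
      using assms(1) unfolding torus_fun_def by auto
  next
    case (Suc n)
    show ?case
    proof (intro allI impI)
      fix x x' :: "nat \<Rightarrow> real"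
      assume h: "(\<forall>m<Suc n. \<exists>k::int. x m = x' m + of_int k) \<and> (\<forall>m. Suc n \<le> m \<and> m < i \<longrightarrow> x m = x' m)"
      define x'' where "x'' = x'(n := x n)"
      have "\<forall>m<n. \<exists>k::int. x m = x'' m + of_int k"
        using h unfolding x''_def by auto
      moreover have "\<forall>m. n \<le> m \<and> m < i \<longrightarrow> x m = x'' m"
        using h unfolding x''_def by (metis fun_upd_other fun_upd_same not_less_eq_eq order_antisym)
      ultimately have "u x = u x''"
        using Suc by simp
      moreover obtain k :: int where "x n = x' n + of_int k"
        using h by auto
      then have "u x'' = u x'"
        unfolding x''_def using torus_fun_add_of_int[OF assms(1), of n x' k] Suc.prems by simp
      ultimately show "u x = u x'"
        by simp
    qed
  qed
  from this[OF order_refl] assms(2) show ?thesis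
    by auto
qed

lemma dist_fun_upd_add_le: "dist (x(j := x j + h)) (x :: nat \<Rightarrow> real) \<le> 2 * \<bar>h\<bar>"
proof -
  have le: "(1/2::real)^n * min (dist ((x(j := x j + h)) (from_nat n)) (x (from_nat n))) 1 \<le> (1/2)^n * \<bar>h\<bar>" for n
  proof -
    have "dist ((x(j := x j + h)) (from_nat n)) (x (from_nat n)) \<le> \<bar>h\<bar>"
      by (cases "from_nat n = j") (auto simp: dist_real_def)
    then show ?thesis
      by (intro mult_left_mono) auto
  qed
  have sg: "summable (\<lambda>n. (1/2::real)^n * \<bar>h\<bar>)"
    by (intro summable_mult2 summable_geometric) simp
  have "dist (x(j := x j + h)) x = (\<Sum>n. (1/2::real)^n * min (dist ((x(j := x j + h)) (from_nat n)) (x (from_nat n))) 1)"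
    by (simp add: dist_fun_def)
  also have "\<dots> \<le> (\<Sum>n. (1/2::real)^n * \<bar>h\<bar>)"
    by (rule suminf_le[OF le summable_comparison_test'[OF sg, of 0] sg]) (use le in auto)
  also have "\<dots> = 2 * \<bar>h\<bar>"
    using suminf_mult2[OF summable_geometric[of "1/2::real"]] suminf_geometric[of "1/2::real"] by simp
  finally show ?thesis .
qed

text \<open>Uniform continuity on the compact box \<open>[-1, 2]\<^sup>i\<close> transfers to all of the torus,
  since every point and its small translates have representatives in that box.\<close>

lemma torus_fun_uniform_shift:
  assumes cu: "continuous_on UNIV u" and tu: "torus_fun i u" and j: "j < i" and eps: "\<epsilon> > 0"
  obtains \<delta> where "\<delta> > 0" "\<And>y h. \<bar>h\<bar> < \<delta> \<Longrightarrow> norm (u (y(j := y j + h)) - u y) < \<epsilon>"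
proof -
  define B where "B = PiE UNIV (\<lambda>m. if m < i then {-1..2} else {0::real})"
  have "compactin (product_topology (\<lambda>_. euclidean) UNIV) B"
    unfolding B_def compactin_PiE by auto
  then have "uniformly_continuous_on B u"
    by (intro compact_uniformly_continuous continuous_on_subset[OF cu])
      (auto simp: euclidean_product_topology)
  then obtain d where d: "d > 0" "\<And>x x'. x \<in> B \<Longrightarrow> x' \<in> B \<Longrightarrow> dist x' x < d \<Longrightarrow> dist (u x') (u x) < \<epsilon>"
    unfolding uniformly_continuous_on_def using eps by metis
  have "norm (u (y(j := y j + h)) - u y) < \<epsilon>" if h: "\<bar>h\<bar> < min 1 (d/2)" for y h
  proof -
    define z where "z = (\<lambda>m. if m < i then frac (y m) else 0)"
    define z' where "z' = z(j := z j + h)"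
    have "-1 \<le> frac (y m) + t \<and> frac (y m) + t \<le> 2" if "\<bar>t\<bar> < 1" for m t
      using frac_ge_0[of "y m"] frac_lt_1[of "y m"] that unfolding abs_less_iff by linarith
    from this[of 0] this[of h] have zB: "z \<in> B" "z' \<in> B"
      using h j unfolding B_def PiE_iff z'_def z_def by auto
    have "dist z' z < d"
      using dist_fun_upd_add_le[of z j h] h unfolding z'_def by linarith
    with d(2)[OF zB] have "dist (u z') (u z) < \<epsilon>" .
    moreover have "u y = u z" "u (y(j := y j + h)) = u z'"
      by (rule torus_fun_eq_if_congruent[OF tu];
          auto simp: z_def z'_def frac_def intro!: exI[of _ "\<lfloor>y m\<rfloor>" for m])+
    ultimately show ?thesis
      by (simp add: dist_norm)
  qed
  with d(1) show ?thesis
    by (intro that[of "min 1 (d/2)"]) auto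
qed

definition fourier_coeff :: "nat \<Rightarrow> ((nat \<Rightarrow> real) \<Rightarrow> complex) \<Rightarrow> (nat \<Rightarrow> int) \<Rightarrow> complex" where
  "fourier_coeff i u l = cube_integral i (\<lambda>y. u y * e (- dotr i l y)) (\<lambda>_. 0)"

lemma fourier_coeff_diff:
  assumes "continuous_on UNIV f" "continuous_on UNIV g"
  shows "fourier_coeff i (\<lambda>y. f y - g y) l = fourier_coeff i f l - fourier_coeff i g l"
proof -
  have "(\<lambda>y. (f y - g y) * e (- dotr i l y)) = (\<lambda>y. f y * e (- dotr i l y) - g y * e (- dotr i l y))"
    by (simp add: left_diff_distrib)
  then show ?thesis
    unfolding fourier_coeff_def by (simp add: cube_integral_diff assms continuous_intros)
qed

lemma fourier_coeff_e:
  assumes "supp_in i l" "supp_in i l'"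
  shows "fourier_coeff i (\<lambda>y. e (dotr i l y)) l' = (if l = l' then 1 else 0)"
proof -
  have "(\<lambda>y. e (dotr i l y) * e (- dotr i l' y)) = (\<lambda>y. 1 * e (\<Sum>m<i. of_int (l m - l' m) * y m))"
    by (rule ext) (simp add: dotr_def e_add[symmetric] sum_subtractf[symmetric] algebra_simps)
  then have "fourier_coeff i (\<lambda>y. e (dotr i l y)) l' = (if \<forall>m<i. l m - l' m = 0 then 1 else 0)"
    unfolding fourier_coeff_def by (simp only: cube_integral_e)
  moreover have "(\<forall>m<i. l m - l' m = 0) \<longleftrightarrow> l = l'"
    using assms unfolding supp_in_def by (auto simp: fun_eq_iff) (metis not_less)
  ultimately show ?thesis
    by simp
qed

lemma fourier_coeff_trig_sum:
  assumes "finite K" "\<And>k. k \<in> K \<Longrightarrow> supp_in i (l k)" "supp_in i l'"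
  shows "fourier_coeff i (\<lambda>y. \<Sum>k\<in>K. w k * e (dotr i (l k) y)) l' = (\<Sum>k\<in>K. if l k = l' then w k else 0)"
proof -
  have "fourier_coeff i (\<lambda>y. \<Sum>k\<in>K. w k * e (dotr i (l k) y)) l'
      = cube_integral i (\<lambda>y. \<Sum>k\<in>K. w k * (e (dotr i (l k) y) * e (- dotr i l' y))) (\<lambda>_. 0)"
    unfolding fourier_coeff_def by (simp add: sum_distrib_right mult.assoc)
  also have "\<dots> = (\<Sum>k\<in>K. w k * fourier_coeff i (\<lambda>y. e (dotr i (l k) y)) l')"
    unfolding fourier_coeff_def
    by (subst cube_integral_sum) (auto intro!: continuous_intros assms(1) simp: cube_integral_cmult)
  also have "\<dots> = (\<Sum>k\<in>K. if l k = l' then w k else 0)"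
    by (intro sum.cong) (simp_all add: fourier_coeff_e assms)
  finally show ?thesis .
qed

lemma fourier_coeff_shear:
  assumes cu: "continuous_on UNIV u" and tu: "torus_fun i u"
  shows "cube_integral i (\<lambda>y. u (shear i M s y) * e (- dotr i l (shear i M s y))) (\<lambda>_. 0)
    = fourier_coeff i u l"
proof -
  have "cube_integral i (\<lambda>y. (\<lambda>z. u z * e (- dotr i l z)) (shear i M s y))
      = cube_integral i (\<lambda>z. u z * e (- dotr i l z))"
  proof (rule cube_integral_shear)
    show "continuous_on UNIV (\<lambda>z. u z * e (- dotr i l z))"
      by (intro continuous_intros cu)
    show "u (x(m := x m + 1)) * e (- dotr i l (x(m := x m + 1))) = u x * e (- dotr i l x)" if "m < i" for x m
      using tu that unfolding torus_fun_def by (simp add: e_dotr_fun_upd_add_one)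
  qed
  then show ?thesis
    unfolding fourier_coeff_def by simp
qed

lemma fourier_coeff_translate:
  assumes cu: "continuous_on UNIV u" and tu: "torus_fun i u" and j: "j < i"
  shows "fourier_coeff i (\<lambda>y. u (y(j := y j + h))) l = e (of_int (l j) * h) * fourier_coeff i u l"
proof -
  define s where "s m = (if m = j then h else 0)" for m
  have shift: "shear i (\<lambda>_ _. 0) s y = y(j := y j + h)" for y
    unfolding shear_def s_def using j by (auto intro!: ext)
  have "(\<lambda>y. u (y(j := y j + h)) * e (- dotr i l y))
      = (\<lambda>y. e (of_int (l j) * h) * (u (shear i (\<lambda>_ _. 0) s y) * e (- dotr i l (shear i (\<lambda>_ _. 0) s y))))"
  proof
    fix y
    have "e (- dotr i l y) = e (of_int (l j) * h) * e (- dotr i l (y(j := y j + h)))"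
      using j by (simp add: dotr_fun_upd e_add[symmetric])
    then show "u (y(j := y j + h)) * e (- dotr i l y)
        = e (of_int (l j) * h) * (u (shear i (\<lambda>_ _. 0) s y) * e (- dotr i l (shear i (\<lambda>_ _. 0) s y)))"
      by (simp add: shift ac_simps)
  qed
  then show ?thesis
    unfolding fourier_coeff_def[of i "\<lambda>y. u (y(j := y j + h))"]
    by (simp only: cube_integral_cmult fourier_coeff_shear[OF cu tu])
qed

lemma norm_fourier_coeff_le:
  assumes "continuous_on UNIV g" "\<And>y. norm (g y) \<le> B"
  shows "norm (fourier_coeff i g l) \<le> B"
  unfolding fourier_coeff_def by (rule norm_cube_integral_le) (auto intro!: continuous_intros assms simp: norm_mult)

text \<open>Riemann--Lebesgue along one coordinate: translating \<open>y\<^sub>j\<close> by \<open>1 / (2 l\<^sub>j)\<close> flips the sign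
  of the coefficient at \<open>l\<close>, so twice that coefficient is the coefficient of a uniformly small
  difference.\<close>

lemma fourier_coeff_decay:
  assumes cu: "continuous_on UNIV u" and tu: "torus_fun i u" and j: "j < i" and eps: "\<epsilon> > 0"
  obtains R where "\<And>l. R \<le> \<bar>l j\<bar> \<Longrightarrow> norm (fourier_coeff i u l) \<le> \<epsilon>"
proof -
  obtain \<delta> where d: "\<delta> > 0" "\<And>y h. \<bar>h\<bar> < \<delta> \<Longrightarrow> norm (u (y(j := y j + h)) - u y) < \<epsilon>"
    using torus_fun_uniform_shift[OF cu tu j eps] by blast
  define R :: int where "R = \<lceil>1/\<delta>\<rceil> + 1"
  have R1: "real_of_int R > 1/\<delta>"
    unfolding R_def by linarith
  then have Rpos: "R > 0"
    using d(1) by (smt (verit) of_int_0_less_iff zero_less_divide_1_iff)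
  have "norm (fourier_coeff i u l) \<le> \<epsilon>" if lR: "R \<le> \<bar>l j\<bar>" for l
  proof -
    define h where "h = 1 / (2 * real_of_int (l j))"
    have "\<bar>h\<bar> = 1 / (2 * \<bar>real_of_int (l j)\<bar>)"
      unfolding h_def by (simp add: abs_mult)
    also have "\<dots> \<le> 1 / (2 * real_of_int R)"
      using lR Rpos by (intro divide_left_mono mult_left_mono) (auto simp flip: of_int_abs)
    also have "\<dots> < \<delta>"
      using R1 d(1) Rpos by (simp add: field_simps)
    finally have hd: "\<bar>h\<bar> < \<delta>" .
    have cu': "continuous_on UNIV (\<lambda>y. u (y(j := y j + h)))"
      by (intro continuous_on_compose2[OF cu] continuous_intros) auto
    have "of_int (l j) * h = 1/2"
      using lR Rpos unfolding h_def by auto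
    then have "e (of_int (l j) * h) = -1"
      using e_add_half[of 0] by (simp only:) simp
    then have "fourier_coeff i (\<lambda>y. u (y(j := y j + h))) l = - fourier_coeff i u l"
      by (simp add: fourier_coeff_translate[OF cu tu j])
    then have "2 * fourier_coeff i u l = fourier_coeff i (\<lambda>y. u y - u (y(j := y j + h))) l"
      by (simp add: fourier_coeff_diff[OF cu cu'])
    moreover have "norm (fourier_coeff i (\<lambda>y. u y - u (y(j := y j + h))) l) \<le> \<epsilon>"
      using d(2)[OF hd] cu cu'
      by (intro norm_fourier_coeff_le) (auto intro!: continuous_intros less_imp_le simp: norm_minus_commute)
    ultimately have "norm (2 * fourier_coeff i u l) \<le> \<epsilon>"
      by simp
    then show ?thesis
      using eps by (simp add: norm_mult)
  qed
  then show ?thesis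
    by (rule that)
qed

lemma fourier_coeff_tendsto_zero:
  assumes "continuous_on UNIV u" "torus_fun i u" "j < i"
    and "filterlim (\<lambda>n. \<bar>l n j\<bar>) at_top F"
  shows "((\<lambda>n. fourier_coeff i u (l n)) \<longlongrightarrow> 0) F"
proof (rule tendsto_norm_zero_cancel, rule order_tendstoI)
  fix \<epsilon> :: real
  assume "\<epsilon> > 0"
  then obtain R where R: "\<And>l. R \<le> \<bar>l j\<bar> \<Longrightarrow> norm (fourier_coeff i u l) \<le> \<epsilon> / 2"
    using fourier_coeff_decay[OF assms(1-3), of "\<epsilon> / 2"] by auto
  from assms(4) have "\<forall>\<^sub>F n in F. R \<le> \<bar>l n j\<bar>"
    by (simp add: filterlim_at_top)
  then show "\<forall>\<^sub>F n in F. norm (fourier_coeff i u (l n)) < \<epsilon>"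
    by eventually_elim (use R \<open>\<epsilon> > 0\<close> in fastforce)
qed (intro always_eventually allI less_le_trans[OF _ norm_ge_zero])

lemma continuous_on_Tlift [continuous_intros]: "continuous_on S (Tlift i A b)"
proof (intro continuous_on_coordinatewise_then_product)
  fix m
  show "continuous_on S (\<lambda>y. Tlift i A b y m)"
    unfolding Tlift_def by (cases "m < i") (auto intro!: continuous_intros)
qed

lemma dotr_Tlift: "dotr i l (Tlift i A b y) = dotr i (Mstep i A l) y + dotr i l b"
proof -
  have "dotr i l (Tlift i A b y) = (\<Sum>m<i. \<Sum>k<i. of_int (l m) * y k * of_int (A k m)) + dotr i l b"
    unfolding dotr_def Tlift_def by (simp add: distrib_left sum.distrib sum_distrib_left mult.assoc)
  also have "(\<Sum>m<i. \<Sum>k<i. of_int (l m) * y k * of_int (A k m)) = dotr i (Mstep i A l) y"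
    unfolding dotr_def Mstep_def by (subst sum.swap) (simp add: sum_distrib_left algebra_simps)
  finally show ?thesis .
qed

lemma Tlift_eq_shear:
  assumes "upper_unipotent i A"
  shows "Tlift i A b = shear i (\<lambda>k m. of_int (A k m)) b"
proof (intro ext)
  fix y m
  show "Tlift i A b y m = shear i (\<lambda>k m. of_int (A k m)) b y m"
  proof (cases "m < i")
    case True
    have split: "{..<i} = {..<m} \<union> {m} \<union> {Suc m..<i}"
      using True by auto
    have "(\<Sum>k<i. y k * of_int (A k m)) = (\<Sum>k<m. y k * of_int (A k m)) + y m * of_int (A m m)
        + (\<Sum>k\<in>{Suc m..<i}. y k * of_int (A k m))"
      unfolding split by (subst sum.union_disjoint, auto)+
    moreover have "(\<Sum>k\<in>{Suc m..<i}. y k * of_int (A k m)) = 0"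
      using assms by (intro sum.neutral) (auto simp: upper_unipotent_def)
    ultimately show ?thesis
      unfolding Tlift_def shear_def using True assms by (simp add: upper_unipotent_def)
  qed (simp add: Tlift_def shear_def)
qed

lemma fourier_coeff_comp_Tlift:
  assumes unip: "upper_unipotent i A" and cu: "continuous_on UNIV u" and tu: "torus_fun i u"
  shows "fourier_coeff i (\<lambda>y. u (Tlift i A b y)) (Mstep i A l) = e (dotr i l b) * fourier_coeff i u l"
proof -
  have "(\<lambda>y. u (Tlift i A b y) * e (- dotr i (Mstep i A l) y))
      = (\<lambda>y. e (dotr i l b) * (u (shear i (\<lambda>k m. of_int (A k m)) b y)
          * e (- dotr i l (shear i (\<lambda>k m. of_int (A k m)) b y))))"
  proof
    fix y
    have "e (- dotr i (Mstep i A l) y) = e (dotr i l b) * e (- dotr i l (Tlift i A b y))"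
      unfolding dotr_Tlift[of i l A b y] by (simp add: e_add[symmetric])
    then show "u (Tlift i A b y) * e (- dotr i (Mstep i A l) y)
        = e (dotr i l b) * (u (shear i (\<lambda>k m. of_int (A k m)) b y)
          * e (- dotr i l (shear i (\<lambda>k m. of_int (A k m)) b y)))"
      by (simp add: Tlift_eq_shear[OF unip] ac_simps)
  qed
  then show ?thesis
    unfolding fourier_coeff_def[of i "\<lambda>y. u (Tlift i A b y)"]
    by (simp only: cube_integral_cmult fourier_coeff_shear[OF cu tu])
qed

lemma trig_sum_has_vector_derivative:
  assumes "finite K"
  shows "((\<lambda>t. \<Sum>k\<in>K. w k * e (dotr i (l k) (x(j := t)))) has_vector_derivative
      (\<Sum>k\<in>K. (w k * (2 * pi * \<i> * of_int (if j < i then l k j else 0))) * e (dotr i (l k) x))) (at (x j))"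
proof -
  have "((\<lambda>t. e (dotr i (l k) (x(j := t)))) has_vector_derivative
      (2 * pi * \<i> * of_int (if j < i then l k j else 0)) * e (dotr i (l k) x)) (at (x j))" for k
    using e_linear_has_vector_derivative[of "dotr i (l k) x" "of_int (if j < i then l k j else 0)" "x j"]
    by (simp only: dotr_fun_upd of_real_of_int_eq)
  from has_vector_derivative_mult_right[OF this] show ?thesis
    by (intro has_vector_derivative_sum) (auto simp: assms mult.assoc)
qed

lemma smooth_in_trig_sum:
  assumes "finite K"
  shows "smooth_in i (\<lambda>y. \<Sum>k\<in>K. w k * e (dotr i (l k) y))"
proof -
  have derivs: "\<exists>w'. iter_pdiff js (\<lambda>y. \<Sum>k\<in>K. w k * e (dotr i (l k) y))
      = (\<lambda>y. \<Sum>k\<in>K. w' k * e (dotr i (l k) y))" for js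
  proof (induction js)
    case (Cons j js)
    then obtain w' where "iter_pdiff js (\<lambda>y. \<Sum>k\<in>K. w k * e (dotr i (l k) y))
        = (\<lambda>y. \<Sum>k\<in>K. w' k * e (dotr i (l k) y))"
      by blast
    then show ?case
      using trig_sum_has_vector_derivative[OF assms, of w' i l]
      by (intro exI[of _ "\<lambda>k. w' k * (2 * pi * \<i> * of_int (if j < i then l k j else 0))"])
        (auto simp: pdiff_def intro!: ext vector_derivative_at)
  qed auto
  show ?thesis
    unfolding smooth_in_def
  proof (intro allI impI conjI)
    fix js j x
    obtain w' where w': "iter_pdiff js (\<lambda>y. \<Sum>k\<in>K. w k * e (dotr i (l k) y))
        = (\<lambda>y. \<Sum>k\<in>K. w' k * e (dotr i (l k) y))"
      using derivs by blast
    show "continuous_on UNIV (iter_pdiff js (\<lambda>y. \<Sum>k\<in>K. w k * e (dotr i (l k) y)))"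
      unfolding w' by (intro continuous_intros)
    show "(\<lambda>t. iter_pdiff js (\<lambda>y. \<Sum>k\<in>K. w k * e (dotr i (l k) y)) (x(j := t))) differentiable at (x j)"
      unfolding w' using trig_sum_has_vector_derivative[OF assms] by (rule differentiableI_vector)
  qed
qed

lemma torus_fun_trig_sum: "torus_fun i (\<lambda>y. \<Sum>k\<in>K. w k * e (dotr i (l k) y))"
  unfolding torus_fun_def
proof (intro conjI allI impI)
  fix x x' :: "nat \<Rightarrow> real"
  assume "\<forall>j<i. x j = x' j"
  then have "dotr i l' x = dotr i l' x'" for l'
    unfolding dotr_def by simp
  then show "(\<Sum>k\<in>K. w k * e (dotr i (l k) x)) = (\<Sum>k\<in>K. w k * e (dotr i (l k) x'))"
    by simp
qed (simp add: e_dotr_fun_upd_add_one)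

lemma continuous_on_if_smooth_in: "smooth_in i u \<Longrightarrow> continuous_on UNIV u"
  unfolding smooth_in_def by (metis empty_subsetI empty_set iter_pdiff.simps(1))

section \<open>Sums over integer intervals and Birkhoff sums\<close>

lemma filterlim_abs_add_of_nat_mult:
  fixes p q :: int
  assumes "q \<noteq> 0"
  shows "filterlim (\<lambda>n. \<bar>p + int n * q\<bar>) at_top sequentially"
  unfolding filterlim_at_top eventually_sequentially
proof (intro allI exI allI impI)
  fix Z :: int and n :: nat
  assume "nat (Z + \<bar>p\<bar>) \<le> n"
  moreover have "int n * 1 \<le> int n * \<bar>q\<bar>"
    using assms by (intro mult_left_mono) auto
  then have "int n \<le> \<bar>int n * q\<bar>"
    by (simp add: abs_mult)
  ultimately show "Z \<le> \<bar>p + int n * q\<bar>"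
    by linarith
qed

lemma sum_symmetric_int_interval:
  "(\<Sum>k\<in>{- int N..int N}. f k) = (\<Sum>k=1..N. f (int k)) + f 0 + (\<Sum>k=1..N. f (- int k))"
proof (induction N)
  case (Suc N)
  have "{- int (Suc N)..int (Suc N)} = insert (int (Suc N)) (insert (- int (Suc N)) {- int N..int N})"
    by auto
  then show ?case
    using Suc by (simp add: algebra_simps)
qed simp

lemma sum_symmetric_int_interval_vanishing_end:
  assumes "f (- int N) = 0"
  shows "(\<Sum>k\<in>{- int N..int N}. f k) = (\<Sum>k=1..N. f (int k)) + f 0 + (\<Sum>k=1..<N. f (- int k))"
proof -
  have "(\<Sum>k=1..N. f (- int k)) = (\<Sum>k=1..<N. f (- int k))"
    using assms by (cases N) (simp_all add: atLeastLessThanSuc_atLeastAtMost[symmetric])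
  then show ?thesis
    by (simp add: sum_symmetric_int_interval)
qed

lemma sum_nonzero_range_reindex:
  fixes c F :: "'b \<Rightarrow> 'a::{comm_monoid_add, mult_zero}"
  assumes "inj ob" "\<And>k. int N \<le> \<bar>k\<bar> \<Longrightarrow> c (ob k) = 0"
  shows "(\<Sum>l\<in>{l\<in>range ob. c l \<noteq> 0}. c l * F l) = (\<Sum>k\<in>{- int N..int N}. c (ob k) * F (ob k))"
proof -
  have "{l\<in>range ob. c l \<noteq> 0} = ob ` {k\<in>{- int N..int N}. c (ob k) \<noteq> 0}"
    using assms(2) by (force simp: abs_le_iff not_le)
  then have "(\<Sum>l\<in>{l\<in>range ob. c l \<noteq> 0}. c l * F l) = (\<Sum>k\<in>{k\<in>{- int N..int N}. c (ob k) \<noteq> 0}. c (ob k) * F (ob k))"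
    using assms(1) by (simp add: sum.reindex inj_on_subset[of ob UNIV])
  also have "\<dots> = (\<Sum>k\<in>{- int N..int N}. c (ob k) * F (ob k))"
    by (intro sum.mono_neutral_left) auto
  finally show ?thesis .
qed

lemma sum_atLeastAtMost_int_shift:
  fixes f :: "int \<Rightarrow> 'a::comm_monoid_add"
  assumes "f a = 0" "f (b + 1) = 0"
  shows "(\<Sum>k\<in>{a..b}. f (k + 1)) = (\<Sum>k\<in>{a..b}. f k)"
proof -
  have "(\<Sum>k\<in>{a..b}. f (k + 1)) = (\<Sum>k\<in>{a + 1..b + 1}. f k)"
    by (rule sum.reindex_bij_witness[of _ "\<lambda>k. k - 1" "\<lambda>k. k + 1"]) auto
  also have "\<dots> = (\<Sum>k\<in>{a..b + 1}. f k)"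
    using assms by (intro sum.mono_neutral_left) (auto, smt (verit))
  also have "\<dots> = (\<Sum>k\<in>{a..b}. f k)"
    using assms by (intro sum.mono_neutral_right) (auto, smt (verit))
  finally show ?thesis .
qed

lemma sum_greaterThanAtMost_int_telescope:
  fixes G V :: "int \<Rightarrow> 'a::ab_group_add"
  assumes tele: "\<And>k. G (k + 1) = V k - V (k + 1)" and "a \<le> b"
  shows "(\<Sum>k\<in>{a<..b}. G k) = V a - V b"
  using \<open>a \<le> b\<close>
proof (induction b rule: int_ge_induct)
  case (step b)
  have "{a<..b + 1} = insert (b + 1) {a<..b}"
    using step by auto
  then show ?case
    using step tele[of b] by simp
qed simp

lemma sum_eq_zero_if_telescoping_decays:
  fixes G V :: "int \<Rightarrow> 'a::real_normed_vector"
  assumes tele: "\<And>k. G (k + 1) = V k - V (k + 1)"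
    and G_N: "\<And>k. int N \<le> \<bar>k\<bar> \<Longrightarrow> G k = 0"
    and V_pos: "(\<lambda>n. V (int n)) \<longlonglongrightarrow> 0" and V_neg: "(\<lambda>n. V (- int n)) \<longlonglongrightarrow> 0"
  shows "(\<Sum>k\<in>{- int N..int N}. G k) = 0"
proof -
  have "V (- int (Suc n)) - V (int n) = (\<Sum>k\<in>{- int N..int N}. G k)" if "N \<le> n" for n
  proof -
    have "V (- int (Suc n)) - V (int n) = (\<Sum>k\<in>{- int (Suc n)<..int n}. G k)"
      by (rule sum_greaterThanAtMost_int_telescope[of G V, OF tele, symmetric]) simp
    also have "\<dots> = (\<Sum>k\<in>{- int N..int N}. G k)"
      using that G_N by (intro sum.mono_neutral_right) auto
    finally show ?thesis .
  qed
  then have "\<forall>\<^sub>F n in sequentially. V (- int (Suc n)) - V (int n) = (\<Sum>k\<in>{- int N..int N}. G k)"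
    unfolding eventually_sequentially by blast
  moreover have "(\<lambda>n. V (- int (Suc n)) - V (int n)) \<longlonglongrightarrow> 0 - 0"
    using tendsto_diff[OF LIMSEQ_Suc[OF V_neg] V_pos] by simp
  ultimately have "(\<lambda>n. \<Sum>k\<in>{- int N..int N}. G k) \<longlonglongrightarrow> 0"
    by (simp add: tendsto_eventually Lim_transform_eventually)
  then show ?thesis
    by (simp add: LIMSEQ_const_iff)
qed

lemma obtain_telescoping_if_sum_eq_zero:
  fixes G :: "int \<Rightarrow> 'a::ab_group_add"
  assumes G_N: "\<And>k. int N \<le> \<bar>k\<bar> \<Longrightarrow> G k = 0" and sum0: "(\<Sum>k\<in>{- int N..int N}. G k) = 0"
  obtains V where "\<And>k. G (k + 1) = V k - V (k + 1)" "\<And>k. int N \<le> \<bar>k\<bar> \<Longrightarrow> V k = 0"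
proof
  define V where "V k = (\<Sum>j\<in>{k<..int N}. G j)" for k
  show "G (k + 1) = V k - V (k + 1)" for k
  proof (cases "k + 1 \<le> int N")
    case True
    then have "{k<..int N} = insert (k + 1) {k + 1<..int N}"
      by auto
    then show ?thesis
      unfolding V_def by simp
  next
    case False
    then show ?thesis
      unfolding V_def using G_N[of "k + 1"] by simp
  qed
  show "V k = 0" if "int N \<le> \<bar>k\<bar>" for k
  proof (cases "k \<ge> int N")
    case False
    with that have "k \<le> - int N"
      by linarith
    have "V k = (\<Sum>j\<in>{- int N<..<int N}. G j)"
      unfolding V_def using \<open>k \<le> - int N\<close> G_N by (intro sum.mono_neutral_right) auto
    also have "\<dots> = (\<Sum>j\<in>{- int N..int N}. G j)"
      using G_N by (intro sum.mono_neutral_left) auto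
    finally show ?thesis
      using sum0 by simp
  qed (simp add: V_def)
qed

definition birkhoff_sum :: "(int \<Rightarrow> real) \<Rightarrow> int \<Rightarrow> real" where
  "birkhoff_sum \<beta> k = (if 0 \<le> k then (\<Sum>j\<in>{0..<k}. \<beta> j) else - (\<Sum>j\<in>{k..<0}. \<beta> j))"

lemma birkhoff_sum_zero [simp]: "birkhoff_sum \<beta> 0 = 0"
  unfolding birkhoff_sum_def by simp

lemma birkhoff_sum_add_one: "birkhoff_sum \<beta> (k + 1) = birkhoff_sum \<beta> k + \<beta> k"
proof (cases "0 \<le> k")
  case True
  then have "{0..<k + 1} = insert k {0..<k}"
    by auto
  with True show ?thesis
    unfolding birkhoff_sum_def by simp
next
  case False
  then have "{k..<0} = insert k {k + 1..<0}"
    by auto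
  with False show ?thesis
    unfolding birkhoff_sum_def by simp
qed

lemma birkhoff_sum_of_nat: "birkhoff_sum \<beta> (int k) = (\<Sum>j=0..<k. \<beta> (int j))"
  unfolding birkhoff_sum_def using sum.atLeast_int_lessThan_int_shift[of \<beta> 0 k] by (simp add: o_def)

lemma birkhoff_sum_uminus_of_nat: "birkhoff_sum \<beta> (- int k) = - (\<Sum>j=1..k. \<beta> (- int j))"
proof -
  have "(\<Sum>j\<in>{- int k..<0}. \<beta> j) = (\<Sum>j=1..k. \<beta> (- int j))"
    by (rule sum.reindex_bij_witness[of _ "\<lambda>j. - int j" "\<lambda>j. nat (- j)"]) auto
  then show ?thesis
    unfolding birkhoff_sum_def by (cases "k = 0") simp_all
qed

lemma twisted_recurrence_iff:
  "c (k + 1) * e (- birkhoff_sum \<beta> (k + 1))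
      = v k * e (- birkhoff_sum \<beta> k) - v (k + 1) * e (- birkhoff_sum \<beta> (k + 1))
    \<longleftrightarrow> c (k + 1) = e (\<beta> k) * v k - v (k + 1)"
proof -
  have "e (- birkhoff_sum \<beta> k) = e (\<beta> k) * e (- birkhoff_sum \<beta> (k + 1))"
    unfolding birkhoff_sum_add_one e_add[symmetric] by simp
  then have "v k * e (- birkhoff_sum \<beta> k) - v (k + 1) * e (- birkhoff_sum \<beta> (k + 1))
      = (e (\<beta> k) * v k - v (k + 1)) * e (- birkhoff_sum \<beta> (k + 1))"
    by (simp add: algebra_simps)
  moreover have "e (- birkhoff_sum \<beta> (k + 1)) \<noteq> 0"
    by (metis norm_e norm_zero zero_neq_one)
  ultimately show ?thesis
    by simp
qed

section \<open>The dual map on frequencies and its orbits\<close>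

lemma upper_unipotent_le: "upper_unipotent d A \<Longrightarrow> i \<le> d \<Longrightarrow> upper_unipotent i A"
  unfolding upper_unipotent_def by auto

lemma supp_in_Mstep: "supp_in i (Mstep i A l)"
  unfolding supp_in_def Mstep_def by auto

context
  fixes i :: nat and A :: "nat \<Rightarrow> nat \<Rightarrow> int"
  assumes unip: "upper_unipotent i A"
begin

lemma Mstep_triangular: "k < i \<Longrightarrow> Mstep i A l k = l k + (\<Sum>n\<in>{k<..<i}. l n * A k n)"
proof -
  assume k: "k < i"
  have split: "{..<i} = {..<k} \<union> {k} \<union> {k<..<i}"
    using k by auto
  have "(\<Sum>n<i. l n * A k n) = (\<Sum>n<k. l n * A k n) + l k * A k k + (\<Sum>n\<in>{k<..<i}. l n * A k n)"
    unfolding split by (subst sum.union_disjoint, auto)+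
  moreover have "(\<Sum>n<k. l n * A k n) = 0"
    using unip k by (intro sum.neutral) (auto simp: upper_unipotent_def)
  ultimately show ?thesis
    unfolding Mstep_def using k unip by (simp add: upper_unipotent_def)
qed

text \<open>Both injectivity and surjectivity are proved by back substitution, determining the
  coordinates from the last one downwards.\<close>

lemma inj_on_Mstep: "inj_on (Mstep i A) {l. supp_in i l}"
proof (rule inj_onI)
  fix p q
  assume supp: "p \<in> {l. supp_in i l}" "q \<in> {l. supp_in i l}" and eq: "Mstep i A p = Mstep i A q"
  have "\<forall>n. i - j \<le> n \<and> n < i \<longrightarrow> p n = q n" for j
  proof (induction j)
    case (Suc j)
    show ?case
    proof (intro allI impI)
      fix n
      assume n: "i - Suc j \<le> n \<and> n < i"
      show "p n = q n"
      proof (cases "i - j \<le> n")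
        case False
        have "(\<Sum>m\<in>{n<..<i}. p m * A n m) = (\<Sum>m\<in>{n<..<i}. q m * A n m)"
          using Suc.IH False n by (intro sum.cong) auto
        then show ?thesis
          using Mstep_triangular[of n p] Mstep_triangular[of n q] n eq by simp
      qed (use Suc.IH n in auto)
    qed
  qed simp
  from this[of i] supp show "p = q"
    unfolding supp_in_def by (auto intro!: ext) (metis not_less)
qed

lemma Mstep_back_substitution:
  assumes "j \<le> i"
  shows "\<exists>p. supp_in i p \<and> (\<forall>k. i - j \<le> k \<and> k < i \<longrightarrow> Mstep i A p k = w k)"
  using assms
proof (induction j)
  case 0
  show ?case
    by (rule exI[of _ "\<lambda>_. 0"]) (auto simp: supp_in_def)
next
  case (Suc j)
  then obtain p where p: "supp_in i p" "\<And>k. i - j \<le> k \<Longrightarrow> k < i \<Longrightarrow> Mstep i A p k = w k"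
    by auto
  define k0 where "k0 = i - Suc j"
  have k0: "k0 < i" "i - j = Suc k0"
    using Suc.prems unfolding k0_def by auto
  define p' where "p' = p(k0 := p k0 + (w k0 - Mstep i A p k0))"
  have "Mstep i A p' k = w k" if "i - Suc j \<le> k" "k < i" for k
  proof -
    have sums: "(\<Sum>n\<in>{k<..<i}. p' n * A k n) = (\<Sum>n\<in>{k<..<i}. p n * A k n)"
      unfolding p'_def using that k0_def by (intro sum.cong) auto
    show ?thesis
    proof (cases "k = k0")
      case True
      then show ?thesis
        using Mstep_triangular[of k p'] Mstep_triangular[of k p] sums that unfolding p'_def by simp
    next
      case False
      then have "Mstep i A p' k = Mstep i A p k"
        using Mstep_triangular[of k p'] Mstep_triangular[of k p] sums that unfolding p'_def by simp
      also have "\<dots> = w k"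
        using p(2) that False k0 by simp
      finally show ?thesis .
    qed
  qed
  moreover have "supp_in i p'"
    using p(1) k0 unfolding supp_in_def p'_def by auto
  ultimately show ?case
    by blast
qed

lemma Mstep_image: "Mstep i A ` {l. supp_in i l} = {l. supp_in i l}"
proof
  show "Mstep i A ` {l. supp_in i l} \<subseteq> {l. supp_in i l}"
    using supp_in_Mstep by auto
  show "{l. supp_in i l} \<subseteq> Mstep i A ` {l. supp_in i l}"
  proof
    fix w
    assume w: "w \<in> {l. supp_in i l}"
    obtain p where p: "supp_in i p" "\<And>k. k < i \<Longrightarrow> Mstep i A p k = w k"
      using Mstep_back_substitution[of i w] by auto
    have "Mstep i A p k = w k" for k
      using p(2) w unfolding supp_in_def Mstep_def by (cases "k < i") auto
    then have "Mstep i A p = w"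
      by blast
    with p(1) show "w \<in> Mstep i A ` {l. supp_in i l}"
      by blast
  qed
qed

lemma bij_betw_Mstep: "bij_betw (Mstep i A) {l. supp_in i l} {l. supp_in i l}"
  unfolding bij_betw_def using inj_on_Mstep Mstep_image by blast

lemma ex1_Mstep_funpow_preimage:
  assumes "supp_in i l"
  shows "\<exists>!p. supp_in i p \<and> (Mstep i A ^^ n) p = l"
proof -
  have bij: "bij_betw (Mstep i A ^^ n) {l. supp_in i l} {l. supp_in i l}"
    by (rule bij_betw_funpow[OF bij_betw_Mstep])
  then obtain p where "supp_in i p" "(Mstep i A ^^ n) p = l"
    using assms unfolding bij_betw_def by (metis (mono_tags, lifting) imageE mem_Collect_eq)
  moreover have "q = p" if "supp_in i q" "(Mstep i A ^^ n) q = l" for q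
    using bij_betw_imp_inj_on[OF bij] that calculation by (simp add: inj_on_def)
  ultimately show ?thesis
    by blast
qed

lemma orb_uminus:
  assumes "supp_in i l0"
  shows "supp_in i (orb i A l0 (- int n))" and "(Mstep i A ^^ n) (orb i A l0 (- int n)) = l0"
proof -
  have "supp_in i (orb i A l0 (- int n)) \<and> (Mstep i A ^^ n) (orb i A l0 (- int n)) = l0"
  proof (cases "n = 0")
    case False
    then show ?thesis
      using theI'[OF ex1_Mstep_funpow_preimage[OF assms, of n]] by (simp add: orb_def)
  qed (use assms in \<open>simp add: orb_def\<close>)
  then show "supp_in i (orb i A l0 (- int n))" and "(Mstep i A ^^ n) (orb i A l0 (- int n)) = l0"
    by simp_all
qed

lemma orb_add_one:
  assumes l0: "supp_in i l0"
  shows "orb i A l0 (k + 1) = Mstep i A (orb i A l0 k)"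
proof (cases "k \<ge> 0")
  case True
  then have "nat (k + 1) = Suc (nat k)"
    by simp
  with True show ?thesis
    by (simp add: orb_def)
next
  case False
  define n where "n = nat (- k) - 1"
  have n: "k = - int (Suc n)"
    using False unfolding n_def by simp
  have "(Mstep i A ^^ n) (Mstep i A (orb i A l0 k)) = l0"
    using orb_uminus(2)[OF l0, of "Suc n"] n by (simp add: funpow_Suc_right del: funpow.simps)
  moreover have "supp_in i (orb i A l0 (k + 1))" "(Mstep i A ^^ n) (orb i A l0 (k + 1)) = l0"
    using orb_uminus[OF l0, of n] n by simp_all
  ultimately show ?thesis
    using ex1_Mstep_funpow_preimage[OF l0, of n] supp_in_Mstep[of i A "orb i A l0 k"] by blast
qed

lemma supp_in_orb:
  assumes "supp_in i l0"
  shows "supp_in i (orb i A l0 k)"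
proof (cases "k \<ge> 0")
  case True
  have "supp_in i ((Mstep i A ^^ n) l0)" for n
    by (cases n) (simp_all add: supp_in_Mstep assms)
  with True show ?thesis
    by (simp add: orb_def)
next
  case False
  then show ?thesis
    using orb_uminus(1)[OF assms, of "nat (- k)"] by simp
qed

lemma orb_last_coordinates:
  assumes l0: "supp_in i l0" and i2: "2 \<le> i"
  shows "orb i A l0 k (i - 1) = l0 (i - 1)"
    and "orb i A l0 k (i - 2) = l0 (i - 2) + k * (l0 (i - 1) * A (i - 2) (i - 1))"
proof -
  have tails: "{i - 1<..<i} = {}" "{i - 2<..<i} = {i - 1}"
    using i2 by auto
  have last: "Mstep i A l (i - 1) = l (i - 1)" for l
    using Mstep_triangular[of "i - 1" l] i2 tails by simp
  have penultimate: "Mstep i A l (i - 2) = l (i - 2) + l (i - 1) * A (i - 2) (i - 1)" for l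
    using Mstep_triangular[of "i - 2" l] i2 tails by simp
  have "orb i A l0 k (i - 1) = l0 (i - 1) \<and>
      orb i A l0 k (i - 2) = l0 (i - 2) + k * (l0 (i - 1) * A (i - 2) (i - 1))"
  proof (induction k rule: int_induct[where k = 0])
    case base
    then show ?case
      by (simp add: orb_def)
  next
    case (step1 k)
    then show ?case
      using orb_add_one[OF l0, of k] last[of "orb i A l0 k"] penultimate[of "orb i A l0 k"]
      by (simp add: distrib_right)
  next
    case (step2 k)
    have step: "orb i A l0 k = Mstep i A (orb i A l0 (k - 1))"
      using orb_add_one[OF l0, of "k - 1"] by simp
    then have "orb i A l0 (k - 1) (i - 1) = l0 (i - 1)"
      using last[of "orb i A l0 (k - 1)"] step2 by simp
    moreover from this have "orb i A l0 k (i - 2) = orb i A l0 (k - 1) (i - 2) + l0 (i - 1) * A (i - 2) (i - 1)"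
      unfolding step penultimate by simp
    ultimately show ?case
      using step2 by (simp add: algebra_simps)
  qed
  then show "orb i A l0 k (i - 1) = l0 (i - 1)"
    and "orb i A l0 k (i - 2) = l0 (i - 2) + k * (l0 (i - 1) * A (i - 2) (i - 1))"
    by simp_all
qed

lemma inj_orb:
  assumes "supp_in i l0" "2 \<le> i" "l0 (i - 1) * A (i - 2) (i - 1) \<noteq> 0"
  shows "inj (orb i A l0)"
  using orb_last_coordinates(2)[OF assms(1,2)] assms(3)
  by (intro injI) (metis add_left_cancel mult_cancel_right)

lemma filterlim_orb_penultimate:
  assumes "supp_in i l0" "2 \<le> i" "l0 (i - 1) * A (i - 2) (i - 1) \<noteq> 0"
  shows "filterlim (\<lambda>n. \<bar>orb i A l0 (int n) (i - 2)\<bar>) at_top sequentially"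
    and "filterlim (\<lambda>n. \<bar>orb i A l0 (- int n) (i - 2)\<bar>) at_top sequentially"
  using filterlim_abs_add_of_nat_mult[OF assms(3), of "l0 (i - 2)"]
    filterlim_abs_add_of_nat_mult[of "- (l0 (i - 1) * A (i - 2) (i - 1))" "l0 (i - 2)"] assms
  by (simp_all add: orb_last_coordinates(2))

end

section \<open>Coboundaries along an orbit\<close>

lemma orbit_sum_eq_zero_if_coboundary:
  fixes ob :: "int \<Rightarrow> nat \<Rightarrow> int" and C :: "int \<Rightarrow> complex"
  assumes unip: "upper_unipotent i A"
    and ob_step: "\<And>k. ob (k + 1) = Mstep i A (ob k)" and ob_supp: "\<And>k. supp_in i (ob k)"
    and ob_inj: "inj ob" and j: "j < i"
    and escape_pos: "filterlim (\<lambda>n. \<bar>ob (int n) j\<bar>) at_top sequentially"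
    and escape_neg: "filterlim (\<lambda>n. \<bar>ob (- int n) j\<bar>) at_top sequentially"
    and C_N: "\<And>k. int N \<le> \<bar>k\<bar> \<Longrightarrow> C k = 0"
    and cu: "continuous_on UNIV u" and tu: "torus_fun i u"
    and cob: "\<And>y. (\<Sum>k\<in>{- int N..int N}. C k * e (dotr i (ob k) y)) = u (Tlift i A b y) - u y"
  shows "(\<Sum>k\<in>{- int N..int N}. C k * e (- birkhoff_sum (\<lambda>k. dotr i (ob k) b) k)) = 0"
proof -
  define \<beta> where "\<beta> k = dotr i (ob k) b" for k
  define v where "v k = fourier_coeff i u (ob k)" for k
  have coeff: "C k = fourier_coeff i (\<lambda>y. u (Tlift i A b y)) (ob k) - v k" for k
  proof -
    have "C k = fourier_coeff i (\<lambda>y. \<Sum>k\<in>{- int N..int N}. C k * e (dotr i (ob k) y)) (ob k)"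
      using ob_inj by (simp add: fourier_coeff_trig_sum ob_supp inj_eq sum.delta') (auto intro!: C_N)
    then show ?thesis
      unfolding cob v_def by (subst (asm) fourier_coeff_diff) (auto intro!: continuous_intros
          continuous_on_compose2[OF cu])
  qed
  have rec: "C (k + 1) = e (\<beta> k) * v k - v (k + 1)" for k
    using coeff[of "k + 1"] unfolding ob_step v_def \<beta>_def by (simp add: fourier_coeff_comp_Tlift[OF unip cu tu])
  have tele: "C (k + 1) * e (- birkhoff_sum \<beta> (k + 1))
      = v k * e (- birkhoff_sum \<beta> k) - v (k + 1) * e (- birkhoff_sum \<beta> (k + 1))" for k
    by (subst twisted_recurrence_iff[where c = C and \<beta> = \<beta> and k = k and v = v]) (rule rec)
  have v_lim: "(\<lambda>n. v (int n)) \<longlonglongrightarrow> 0" "(\<lambda>n. v (- int n)) \<longlonglongrightarrow> 0"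
    unfolding v_def
    using fourier_coeff_tendsto_zero[OF cu tu j, where l = "\<lambda>n. ob (int n)"]
      fourier_coeff_tendsto_zero[OF cu tu j, where l = "\<lambda>n. ob (- int n)"] escape_pos escape_neg
    by simp_all
  have V_lim: "(\<lambda>n. v (int n) * e (- birkhoff_sum \<beta> (int n))) \<longlonglongrightarrow> 0"
      "(\<lambda>n. v (- int n) * e (- birkhoff_sum \<beta> (- int n))) \<longlonglongrightarrow> 0"
    using tendsto_norm_zero[OF v_lim(1)] tendsto_norm_zero[OF v_lim(2)]
    by (simp_all add: tendsto_norm_zero_cancel norm_mult)
  have "(\<Sum>k\<in>{- int N..int N}. C k * e (- birkhoff_sum \<beta> k)) = 0"
    by (rule sum_eq_zero_if_telescoping_decays[OF tele _ V_lim]) (simp add: C_N)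
  then show ?thesis
    unfolding \<beta>_def .
qed

lemma coboundary_if_orbit_sum_eq_zero:
  fixes ob :: "int \<Rightarrow> nat \<Rightarrow> int" and C :: "int \<Rightarrow> complex"
  assumes ob_step: "\<And>k. ob (k + 1) = Mstep i A (ob k)"
    and C_N: "\<And>k. int N \<le> \<bar>k\<bar> \<Longrightarrow> C k = 0"
    and sum0: "(\<Sum>k\<in>{- int N..int N}. C k * e (- birkhoff_sum (\<lambda>k. dotr i (ob k) b) k)) = 0"
  shows "smooth_coboundary i A b (\<lambda>y. \<Sum>k\<in>{- int N..int N}. C k * e (dotr i (ob k) y))"
proof -
  define \<beta> where "\<beta> k = dotr i (ob k) b" for k
  obtain V where tele: "\<And>k. C (k + 1) * e (- birkhoff_sum \<beta> (k + 1))
        = V k - V (k + 1)"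
      and V_N: "\<And>k. int N \<le> \<bar>k\<bar> \<Longrightarrow> V k = 0"
    using obtain_telescoping_if_sum_eq_zero[of N "\<lambda>k. C k * e (- birkhoff_sum \<beta> k)"] C_N sum0
    unfolding \<beta>_def by auto
  define v where "v k = V k * e (birkhoff_sum \<beta> k)" for k
  have V_eq: "V k = v k * e (- birkhoff_sum \<beta> k)" for k
    unfolding v_def using e_uminus_mult[of "birkhoff_sum \<beta> k"] by (simp add: mult.assoc mult.commute)
  have "C (k + 1) = e (\<beta> k) * v k - v (k + 1)" for k
    using tele[of k] unfolding V_eq
    by (subst (asm) twisted_recurrence_iff[where c = C and \<beta> = \<beta> and k = k and v = v])
  then have rec: "C k = e (\<beta> (k - 1)) * v (k - 1) - v k" for k
    by (metis diff_add_cancel)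
  have v_N: "v k = 0" if "int N \<le> \<bar>k\<bar>" for k
    unfolding v_def using V_N[OF that] by simp
  define I where "I = {- int N..int N}"
  define u where "u y = (\<Sum>k\<in>I. v k * e (dotr i (ob k) y))" for y
  have "u (Tlift i A b y) - u y = (\<Sum>k\<in>I. C k * e (dotr i (ob k) y))" for y
  proof -
    define f where "f k = e (\<beta> (k - 1)) * v (k - 1) * e (dotr i (ob k) y)" for k
    have "u (Tlift i A b y) = (\<Sum>k\<in>I. f (k + 1))"
      unfolding u_def f_def \<beta>_def dotr_Tlift ob_step by (simp add: e_add ac_simps)
    also have "\<dots> = (\<Sum>k\<in>I. f k)"
      unfolding I_def f_def by (rule sum_atLeastAtMost_int_shift) (simp_all add: v_N)
    finally show ?thesis
      unfolding u_def f_def rec by (simp add: sum_subtractf[symmetric] algebra_simps)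
  qed
  moreover have "torus_fun i u" "smooth_in i u"
    unfolding u_def[abs_def] I_def by (auto intro: torus_fun_trig_sum smooth_in_trig_sum)
  ultimately show ?thesis
    unfolding smooth_coboundary_def I_def by metis
qed

theorem smooth_coboundary_orbit_iff:
  fixes ob :: "int \<Rightarrow> nat \<Rightarrow> int" and C :: "int \<Rightarrow> complex"
  assumes "upper_unipotent i A"
    and ob_step: "\<And>k. ob (k + 1) = Mstep i A (ob k)" and "\<And>k. supp_in i (ob k)"
    and "inj ob" and "j < i"
    and "filterlim (\<lambda>n. \<bar>ob (int n) j\<bar>) at_top sequentially"
    and "filterlim (\<lambda>n. \<bar>ob (- int n) j\<bar>) at_top sequentially"
    and C_N: "\<And>k. int N \<le> \<bar>k\<bar> \<Longrightarrow> C k = 0"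
  shows "smooth_coboundary i A b (\<lambda>y. \<Sum>k\<in>{- int N..int N}. C k * e (dotr i (ob k) y))
    \<longleftrightarrow> (\<Sum>k\<in>{- int N..int N}. C k * e (- birkhoff_sum (\<lambda>k. dotr i (ob k) b) k)) = 0"
proof
  assume "smooth_coboundary i A b (\<lambda>y. \<Sum>k\<in>{- int N..int N}. C k * e (dotr i (ob k) y))"
  then obtain u where "torus_fun i u" "smooth_in i u"
    "\<And>y. (\<Sum>k\<in>{- int N..int N}. C k * e (dotr i (ob k) y)) = u (Tlift i A b y) - u y"
    unfolding smooth_coboundary_def by blast
  then show "(\<Sum>k\<in>{- int N..int N}. C k * e (- birkhoff_sum (\<lambda>k. dotr i (ob k) b) k)) = 0"
    using orbit_sum_eq_zero_if_coboundary[where C = C and N = N and u = u, OF assms]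
      continuous_on_if_smooth_in by blast
qed (rule coboundary_if_orbit_sum_eq_zero[where ob = ob and C = C and N = N, OF ob_step C_N])

theorem lemma3p3:
  fixes d i :: nat and A :: "nat \<Rightarrow> nat \<Rightarrow> int" and b :: "nat \<Rightarrow> real"
    and l0 :: "nat \<Rightarrow> int" and c :: "(nat \<Rightarrow> int) \<Rightarrow> complex" and N :: nat
    and \<omega> :: "(nat \<Rightarrow> int) set" and \<Psi> :: "(nat \<Rightarrow> real) \<Rightarrow> complex"
  assumes d2: "2 \<le> d"
    and unip: "upper_unipotent d A"
    and ue: "uniquely_ergodic d A b"
    and superdiag: "\<forall>j. j + 1 < d \<longrightarrow> A j (j + 1) \<noteq> 0"
    and i_range: "2 \<le> i" "i \<le> d"
    and l0_supp: "supp_in i l0"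
    and omega_def: "\<omega> = range (orb i A l0)"
    and last_nz: "\<exists>l\<in>\<omega>. l (i - 1) \<noteq> 0"
    and c_fin: "finite {l\<in>\<omega>. c l \<noteq> 0}"
    and c_N: "\<forall>n::int. \<bar>n\<bar> \<ge> int N \<longrightarrow> c (orb i A l0 n) = 0"
    and Psi_def: "\<forall>y. \<Psi> y = (\<Sum>l\<in>{l\<in>\<omega>. c l \<noteq> 0}. c l * e (dotr i l y))"
  shows "smooth_coboundary i A b \<Psi> \<longleftrightarrow>
    (\<Sum>k=1..N. c (orb i A l0 (int k)) *
         e (- (\<Sum>j=0..<k. dotr i (orb i A l0 (int j)) b)))
    + c l0
    + (\<Sum>k=1..<N. c (orb i A l0 (- int k)) *
         e (\<Sum>j=1..k. dotr i (orb i A l0 (- int j)) b)) = 0"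
proof -
  have unip_i: "upper_unipotent i A"
    using unip i_range(2) by (rule upper_unipotent_le)
  have "A (i - 2) (i - 1) \<noteq> 0"
    using superdiag[rule_format, of "i - 2"] i_range by (simp add: Suc_diff_Suc numeral_2_eq_2)
  moreover have "l0 (i - 1) \<noteq> 0"
    using last_nz orb_last_coordinates(1)[OF unip_i l0_supp i_range(1)] unfolding omega_def by auto
  ultimately have nz: "l0 (i - 1) * A (i - 2) (i - 1) \<noteq> 0"
    by simp
  have c_N': "\<And>k. int N \<le> \<bar>k\<bar> \<Longrightarrow> c (orb i A l0 k) = 0"
    using c_N by auto
  note orbit_iff = smooth_coboundary_orbit_iff[where ob = "orb i A l0" and C = "\<lambda>k. c (orb i A l0 k)"
      and N = N and b = b, OF unip_i orb_add_one[OF unip_i l0_supp] supp_in_orb[OF unip_i l0_supp]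
      inj_orb[OF unip_i l0_supp i_range(1) nz] _ filterlim_orb_penultimate[OF unip_i l0_supp i_range(1) nz] c_N']
  have "\<Psi> = (\<lambda>y. \<Sum>k\<in>{- int N..int N}. c (orb i A l0 k) * e (dotr i (orb i A l0 k) y))"
    using Psi_def sum_nonzero_range_reindex[where c = c and N = N, OF inj_orb[OF unip_i l0_supp i_range(1) nz] c_N']
    unfolding omega_def by auto
  moreover have "orb i A l0 0 = l0"
    unfolding orb_def by simp
  ultimately show ?thesis
    using orbit_iff i_range c_N'
    by (simp add: sum_symmetric_int_interval_vanishing_end birkhoff_sum_of_nat birkhoff_sum_uminus_of_nat)
qed

end
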